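(* Fix a leader policy $\pi$ and functions $\tilde Q_h:\mathcal S\times\mathcal B\to\mathbb R$, $h\in[H]$; let $\tilde V_h(s)=\eta^{-1}\log\sum_be^{\eta\tilde Q_h(s,b)}$, $\tilde A_h=\tilde Q_h-\tilde V_h$, $\tilde\nu_h(b\mid s)=\exp(\eta\tilde A_h(s,b))$, $\tilde V_{H+1}=0$. Define $$\Delta_h^{(1)}(s_h,b_h)=\mathbb E_{s_h,b_h}\Bigl[\sum_{i=h}^H\gamma^{i-h}\bigl(r_i^\pi+\gamma P_i^\pi\tilde V_{i+1}-\tilde Q_i\bigr)(s_i,b_i)\Bigr],\qquad \Delta_h^{(2)}(s_h)=\mathbb E_{s_h}\Bigl[\sum_{i=h}^H\gamma^{i-h}\mathrm{KL}\bigl(\nu_i^\pi(\cdot\mid s_i)\,\|\,\tilde\nu_i(\cdot\mid s_i)\bigr)\Bigr],$$ with $\Delta^{(2)}_{H+1}=0$. Then for all $h\in[H]$ and $(s_h,b_h)\in\mathcal S\times\mathcal B$, $$A_h^\pi(s_h,b_h)-\tilde A_h(s_h,b_h)=(\mathbb E_{s_h,b_h}-\mathbb E_{s_h})\bigl[\Delta_h^{(1)}(s_h,b_h)-\gamma\eta^{-1}\Delta_{h+1}^{(2)}(s_{h+1})\bigr]+\eta^{-1}\mathrm{KL}\bigl(\nu_h^\pi(\cdot\mid s_h)\,\|\,\tilde\nu_h(\cdot\mid s_h)\bigr),$$ where $\mathrm{KL}(\nu_h^\pi(\cdot\mid s_h)\|\tilde\nu_h(\cdot\mid s_h))=\eta\,\mathbb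 E_{s_h}[A_h^\pi-\tilde A_h]$. In particular, in the myopic case ($\gamma=0$, $\tilde Q_h=\tilde r_h^\pi$ for some estimated reward $\tilde r$ with $\tilde r_h^\pi(s,b)=\sum_a\pi_h(a\mid s,b)\tilde r_h(s,a,b)$), $$A_h^\pi(s_h,b_h)-\tilde A_h(s_h,b_h)=(\mathbb E_{s_h,b_h}-\mathbb E_{s_h})\bigl[(r_h^\pi-\tilde r_h^\pi)(s_h,b_h)\bigr]+\eta^{-1}\mathrm{KL}\bigl(\nu_h^\pi(\cdot\mid s_h)\|\tilde\nu_h(\cdot\mid s_h)\bigr).$$
   Context: Episodic leader–follower Markov game (true model): state space $\mathcal S$, actions $\mathcal A,\mathcal B$, horizon $H$, transitions $P_h(\cdot\mid s,a,b)$, follower rewards $r_h$. Leader policy $\pi_h(\cdot\mid s,b)\in\Delta(\mathcal A)$; $r_h^\pi(s,b)=\sum_a\pi_h(a\mid s,b)r_h(s,a,b)$, $P_h^\pi(s'\mid s,b)=\sum_a\pi_h(a\mid s,b)P_h(s'\mid s,a,b)$. With $\eta>0$, $\gamma\in[0,1]$: $V_{H+1}^\pi=0$, $Q_h^\pi=r_h^\pi+\gamma P_h^\pi V_{h+1}^\pi$, $V_h^\pi(s)=\eta^{-1}\log\sum_be^{\eta Q_h^\pi(s,b)}$, $A_h^\pi=Q_h^\pi-V_h^\pi$, $\nu_h^\pi(b\mid s)=\exp(\eta A_h^\pi(s,b))$. $\mathbb E_{s_h}$, $\mathbb E_{s_h,b_h}$: conditional expectations given $s_h$, resp. $(s_h,b_h)$,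 over a trajectory of $(\pi,\nu^\pi)$ on the true model ($b_l\sim\nu_l^\pi(\cdot\mid s_l)$, $a_l\sim\pi_l(\cdot\mid s_l,b_l)$, $s_{l+1}\sim P_l$); in particular $\mathbb E_{s_h}$ also averages over $b_h\sim\nu_h^\pi(\cdot\mid s_h)$. *)

theory Defs
  imports Complex_Main
begin

text \<open>Types: 's states, 'a leader actions,
 'b follower actions (all finite). Time steps are 1..H.
 P h s a b s' = P_h(s' | s,a,b);  r h s a b = r_h(s,a,b);  pol h s b a = pi_h(a | s,b).\<close>

definition rpi :: "(nat \<Rightarrow> 's \<Rightarrow> 'b \<Rightarrow> 'a::finite \<Rightarrow> real) \<Rightarrow> (nat \<Rightarrow> 's \<Rightarrow> 'a \<Rightarrow> 'b \<Rightarrow> real)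
                   \<Rightarrow> nat \<Rightarrow> 's \<Rightarrow> 'b \<Rightarrow> real" where
  "rpi pol r h s b = (\<Sum>a\<in>UNIV. pol h s b a * r h s a b)"

definition Ppi :: "(nat \<Rightarrow> 's \<Rightarrow> 'b \<Rightarrow> 'a::finite \<Rightarrow> real) \<Rightarrow> (nat \<Rightarrow> 's \<Rightarrow> 'a \<Rightarrow> 'b \<Rightarrow> 's \<Rightarrow> real)
                   \<Rightarrow> nat \<Rightarrow> 's \<Rightarrow> 'b \<Rightarrow> 's \<Rightarrow> real" where
  "Ppi pol P h s b s' = (\<Sum>a\<in>UNIV. pol h s b a * P h s a b s')"

definition lse :: "real \<Rightarrow> ('b::finite \<Rightarrow> real) \<Rightarrow> real" where
  "lse \<eta> q = inverse \<eta> * ln (\<Sum>b\<in>UNIV. exp (\<eta> * q b))"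

text \<open>True value function, by recursion on the number k of remaining steps:
  Vrem k = V_{H+1-k}.\<close>
primrec Vrem :: "(nat \<Rightarrow> 's::finite \<Rightarrow> 'a::finite \<Rightarrow> 'b::finite \<Rightarrow> 's \<Rightarrow> real) \<Rightarrow> (nat \<Rightarrow> 's \<Rightarrow> 'a \<Rightarrow> 'b \<Rightarrow> real)
   \<Rightarrow> (nat \<Rightarrow> 's \<Rightarrow> 'b \<Rightarrow> 'a \<Rightarrow> real) \<Rightarrow> real \<Rightarrow> real \<Rightarrow> nat \<Rightarrow> nat \<Rightarrow> 's \<Rightarrow> real" where
  "Vrem P r pol \<gamma> \<eta> H 0 = (\<lambda>s. 0)"
| "Vrem P r pol \<gamma> \<eta> H (Suc k) = (\<lambda>s. lse \<eta> (\<lambda>b. rpi pol r (H - k) s b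
        + \<gamma> * (\<Sum>s'\<in>UNIV. Ppi pol P (H - k) s b s' * Vrem P r pol \<gamma> \<eta> H k s')))"

definition Vpi where
  "Vpi P r pol \<gamma> \<eta> H h s = Vrem P r pol \<gamma> \<eta> H (H + 1 - h) s"

definition Qpi where
  "Qpi P r pol \<gamma> \<eta> H h s b = rpi pol r h s b
      + \<gamma> * (\<Sum>s'\<in>UNIV. Ppi pol P h s b s' * Vpi P r pol \<gamma> \<eta> H (Suc h) s')"

definition Api where
  "Api P r pol \<gamma> \<eta> H h s b = Qpi P r pol \<gamma> \<eta> H h s b - Vpi P r pol \<gamma> \<eta> H h s"

definition nupi where
  "nupi P r pol \<gamma> \<eta> H h s b = exp (\<eta> * Api P r pol \<gamma> \<eta> H h s b)"

definition Vt :: "real \<Rightarrow> nat \<Rightarrow> (nat \<Rightarrow> 's \<Rightarrow> 'b::finite \<Rightarrow> real) \<Rightarrow> nat \<Rightarrow> 's \<Rightarrow> real" where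
  "Vt \<eta> H Qt h s = (if H < h then 0 else lse \<eta> (Qt h s))"

definition At where
  "At \<eta> H Qt h s b = Qt h s b - Vt \<eta> H Qt h s"

definition nut where
  "nut \<eta> H Qt h s b = exp (\<eta> * At \<eta> H Qt h s b)"

definition KL :: "('b::finite \<Rightarrow> real) \<Rightarrow> ('b \<Rightarrow> real) \<Rightarrow> real" where
  "KL p q = (\<Sum>b\<in>UNIV. p b * ln (p b / q b))"

text \<open>Law of (s_{h+k}, b_{h+k}) given (s_h, b_h) = (s, b) under (pi, nu^pi) on the true model.\<close>
primrec occ where
  "occ P r pol \<gamma> \<eta> H h s b 0 = (\<lambda>s' b'. if s' = s \<and> b' = b then 1 else 0)"
| "occ P r pol \<gamma> \<eta> H h s b (Suc k) = (\<lambda>s' b'. \<Sum>s0\<in>UNIV. \<Sum>b0\<in>UNIV.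
      occ P r pol \<gamma> \<eta> H h s b k s0 b0 * Ppi pol P (h + k) s0 b0 s'
        * nupi P r pol \<gamma> \<eta> H (h + k + 1) s' b')"

text \<open>E_{s_h,b_h}[f(s_i,b_i)] (for i >= h) and E_{s_h}[f(s_i,b_i)] (also averaging b_h ~ nu^pi_h).\<close>
definition Esb where
  "Esb P r pol \<gamma> \<eta> H h s b i f =
     (\<Sum>s'\<in>UNIV. \<Sum>b'\<in>UNIV. occ P r pol \<gamma> \<eta> H h s b (i - h) s' b' * f s' b')"

definition Es where
  "Es P r pol \<gamma> \<eta> H h s i f =
     (\<Sum>b\<in>UNIV. nupi P r pol \<gamma> \<eta> H h s b * Esb P r pol \<gamma> \<eta> H h s b i f)"

definition Delta1 where
  "Delta1 P r pol \<gamma> \<eta> H Qt h s b =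
     (\<Sum>i\<in>{h..H}. \<gamma> ^ (i - h) * Esb P r pol \<gamma> \<eta> H h s b i
        (\<lambda>s' b'. rpi pol r i s' b' + \<gamma> * (\<Sum>s''\<in>UNIV. Ppi pol P i s' b' s'' * Vt \<eta> H Qt (Suc i) s'')
                 - Qt i s' b'))"

definition Delta2 where
  "Delta2 P r pol \<gamma> \<eta> H Qt h s =
     (\<Sum>i\<in>{h..H}. \<gamma> ^ (i - h) * Es P r pol \<gamma> \<eta> H h s i
        (\<lambda>s' b'. KL (nupi P r pol \<gamma> \<eta> H i s') (nut \<eta> H Qt i s')))"

end

theory Submission
  imports Defs
begin

text \<open>
  For two Gibbs policies
    KL(nu^pi_h || nu~_h) = eta (E_{b ~ nu^pi_h}[Q^pi_h - Q~_h] - (V^pi_h - V~_h)),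
  so averaging a Q-gap over the follower's response yields the V-gap plus a KL term.
  Unrolling the first step of Delta1 and Delta2 and inducting backwards from H gives
    Delta1_h(s,b) = Q^pi_h(s,b) - Q~_h(s,b) + gamma/eta E_{s' ~ P^pi_h(.|s,b)}[Delta2_{h+1}(s')],
  and centring this in b yields the theorem.
\<close>

lemma sum_pair_delta:
  "(\<Sum>x\<in>UNIV. \<Sum>y\<in>UNIV. (if x = a \<and> y = c then 1 else 0) * g x y) = (g a c :: 'c::comm_semiring_1)"
  for a :: "'x::finite" and c :: "'y::finite"
  by (simp add: of_bool_def[symmetric] of_bool_conj sum.delta' mult.assoc flip: sum_distrib_left)

lemma sum_pair_delta':
  "(\<Sum>x\<in>UNIV. \<Sum>y\<in>UNIV. g x y * (if a = x \<and> c = y then 1 else 0)) = (g a c :: 'c::comm_semiring_1)"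
  for a :: "'x::finite" and c :: "'y::finite"
  using sum_pair_delta[of a c g] by (simp add: mult.commute eq_commute)

lemma sum_swap_pairs:
  "(\<Sum>a\<in>A. \<Sum>b\<in>B. \<Sum>c\<in>C. \<Sum>d\<in>D. F a b c d) = (\<Sum>c\<in>C. \<Sum>d\<in>D. \<Sum>a\<in>A. \<Sum>b\<in>B. F a b c d)"
  by (simp only: sum.swap[of _ B C] sum.swap[of _ A C] sum.swap[of _ B D] sum.swap[of _ A D])

lemma lse_softmax_sum:
  fixes q :: "'b::finite \<Rightarrow> real"
  assumes "\<eta> \<noteq> 0"
  shows "(\<Sum>b\<in>UNIV. exp (\<eta> * (q b - lse \<eta> q))) = 1"
proof -
  define Z where "Z = (\<Sum>b\<in>UNIV. exp (\<eta> * q b))"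
  have "Z > 0" unfolding Z_def by (intro sum_pos) auto
  moreover have "exp (\<eta> * lse \<eta> q) = Z"
    using assms \<open>Z > 0\<close> by (simp add: lse_def Z_def flip: mult.assoc)
  ultimately show ?thesis
    by (simp add: right_diff_distrib exp_diff Z_def flip: sum_divide_distrib)
qed

lemma KL_exp:
  "KL (\<lambda>b. exp (\<eta> * x b)) (\<lambda>b. exp (\<eta> * y b)) = \<eta> * (\<Sum>b\<in>UNIV. exp (\<eta> * x b) * (x b - y b))"
  by (simp add: KL_def sum_distrib_left right_diff_distrib flip: exp_diff) (simp add: mult_ac)

context
  fixes P :: "nat \<Rightarrow> 's::finite \<Rightarrow> 'a::finite \<Rightarrow> 'b::finite \<Rightarrow> 's \<Rightarrow> real"
    and r :: "nat \<Rightarrow> 's \<Rightarrow> 'a \<Rightarrow> 'b \<Rightarrow> real"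
    and pol :: "nat \<Rightarrow> 's \<Rightarrow> 'b \<Rightarrow> 'a \<Rightarrow> real"
    and Qt :: "nat \<Rightarrow> 's \<Rightarrow> 'b \<Rightarrow> real"
    and \<gamma> \<eta> :: real and H :: nat
begin

private abbreviation (input) "P\<pi> \<equiv> Ppi pol P"
private abbreviation (input) "\<nu> \<equiv> nupi P r pol \<gamma> \<eta> H"
private abbreviation (input) "V \<equiv> Vpi P r pol \<gamma> \<eta> H"
private abbreviation (input) "Q \<equiv> Qpi P r pol \<gamma> \<eta> H"
private abbreviation (input) "A \<equiv> Api P r pol \<gamma> \<eta> H"
private abbreviation (input) "V\<^sub>t \<equiv> Vt \<eta> H Qt"
private abbreviation (input) "A\<^sub>t \<equiv> At \<eta> H Qt"
private abbreviation (input) "\<nu>\<^sub>t \<equiv> nut \<eta> H Qt"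
private abbreviation (input) "E\<^sub>s\<^sub>b \<equiv> Esb P r pol \<gamma> \<eta> H"
private abbreviation (input) "E\<^sub>s \<equiv> Es P r pol \<gamma> \<eta> H"
private abbreviation (input) "\<Delta>\<^sub>1 \<equiv> Delta1 P r pol \<gamma> \<eta> H Qt"
private abbreviation (input) "\<Delta>\<^sub>2 \<equiv> Delta2 P r pol \<gamma> \<eta> H Qt"

lemma occ_Suc_first:
  "occ P r pol \<gamma> \<eta> H h s b (Suc k) s' b' =
     (\<Sum>s1\<in>UNIV. \<Sum>b1\<in>UNIV. P\<pi> h s b s1 * \<nu> (Suc h) s1 b1 * occ P r pol \<gamma> \<eta> H (Suc h) s1 b1 k s' b')"
proof (induction k arbitrary: s' b')
  case 0
  have "occ P r pol \<gamma> \<eta> H h s b (Suc 0) s' b' = P\<pi> h s b s' * \<nu> (Suc h) s' b'"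
    by (simp add: sum_pair_delta mult.assoc)
  then show ?case
    by (simp add: sum_pair_delta')
next
  case (Suc k)
  have "occ P r pol \<gamma> \<eta> H h s b (Suc (Suc k)) s' b' =
      (\<Sum>s0\<in>UNIV. \<Sum>b0\<in>UNIV.
         (\<Sum>s1\<in>UNIV. \<Sum>b1\<in>UNIV. P\<pi> h s b s1 * \<nu> (Suc h) s1 b1 * occ P r pol \<gamma> \<eta> H (Suc h) s1 b1 k s0 b0)
         * P\<pi> (h + Suc k) s0 b0 s' * \<nu> (h + Suc k + 1) s' b')"
    by (simp only: occ.simps(2)[of P r pol \<gamma> \<eta> H h s b "Suc k"] Suc.IH)
  also have "\<dots> = (\<Sum>s0\<in>UNIV. \<Sum>b0\<in>UNIV. \<Sum>s1\<in>UNIV. \<Sum>b1\<in>UNIV. P\<pi> h s b s1 * (\<nu> (Suc h) s1 b1 *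
      (occ P r pol \<gamma> \<eta> H (Suc h) s1 b1 k s0 b0 * (P\<pi> (Suc h + k) s0 b0 s' * \<nu> (Suc h + k + 1) s' b'))))"
    by (simp add: sum_distrib_right mult.assoc)
  also have "\<dots> = (\<Sum>s1\<in>UNIV. \<Sum>b1\<in>UNIV. \<Sum>s0\<in>UNIV. \<Sum>b0\<in>UNIV. P\<pi> h s b s1 * (\<nu> (Suc h) s1 b1 *
      (occ P r pol \<gamma> \<eta> H (Suc h) s1 b1 k s0 b0 * (P\<pi> (Suc h + k) s0 b0 s' * \<nu> (Suc h + k + 1) s' b'))))"
    by (rule sum_swap_pairs)
  also have "\<dots> = (\<Sum>s1\<in>UNIV. \<Sum>b1\<in>UNIV. P\<pi> h s b s1 * \<nu> (Suc h) s1 b1 * occ P r pol \<gamma> \<eta> H (Suc h) s1 b1 (Suc k) s' b')"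
    by (simp add: sum_distrib_left mult.assoc)
  finally show ?case .
qed

lemma Esb_self: "E\<^sub>s\<^sub>b h s b h f = f s b"
  by (simp add: Esb_def sum_pair_delta)

lemma Esb_Suc_first:
  assumes "h < i"
  shows "E\<^sub>s\<^sub>b h s b i f = (\<Sum>s1\<in>UNIV. \<Sum>b1\<in>UNIV. P\<pi> h s b s1 * \<nu> (Suc h) s1 b1 * E\<^sub>s\<^sub>b (Suc h) s1 b1 i f)"
proof -
  have "i - h = Suc (i - Suc h)" using assms by simp
  then have "E\<^sub>s\<^sub>b h s b i f = (\<Sum>s'\<in>UNIV. \<Sum>b'\<in>UNIV. \<Sum>s1\<in>UNIV. \<Sum>b1\<in>UNIV.
      P\<pi> h s b s1 * \<nu> (Suc h) s1 b1 * (occ P r pol \<gamma> \<eta> H (Suc h) s1 b1 (i - Suc h) s' b' * f s' b'))"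
    unfolding Esb_def by (simp only: occ_Suc_first) (simp add: sum_distrib_right mult.assoc)
  also have "\<dots> = (\<Sum>s1\<in>UNIV. \<Sum>b1\<in>UNIV. \<Sum>s'\<in>UNIV. \<Sum>b'\<in>UNIV.
      P\<pi> h s b s1 * \<nu> (Suc h) s1 b1 * (occ P r pol \<gamma> \<eta> H (Suc h) s1 b1 (i - Suc h) s' b' * f s' b'))"
    by (rule sum_swap_pairs)
  finally show ?thesis
    by (simp add: Esb_def sum_distrib_left)
qed

lemma Es_Suc_first:
  assumes "h < i"
  shows "E\<^sub>s h s i f = (\<Sum>b\<in>UNIV. \<nu> h s b * (\<Sum>s1\<in>UNIV. P\<pi> h s b s1 * E\<^sub>s (Suc h) s1 i f))"
  by (simp add: Es_def Esb_Suc_first[OF assms] sum_distrib_left mult_ac)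

lemma Vpi_eq_lse:
  assumes "h \<le> H"
  shows "V h s = lse \<eta> (Q h s)"
proof -
  have "H + 1 - h = Suc (H - h)" "H - (H - h) = h" "H + 1 - Suc h = H - h"
    using assms by auto
  then show ?thesis
    by (simp add: Vpi_def Qpi_def[abs_def])
qed

lemma nupi_sum:
  assumes "\<eta> \<noteq> 0" "h \<le> H"
  shows "(\<Sum>b\<in>UNIV. \<nu> h s b) = 1"
  using lse_softmax_sum[OF assms(1), of "Q h s"] assms(2)
  by (simp add: nupi_def Api_def Vpi_eq_lse)

lemma KL_nupi_nut:
  assumes "\<eta> \<noteq> 0" "h \<le> H"
  shows "KL (\<nu> h s) (\<nu>\<^sub>t h s) = \<eta> * ((\<Sum>b\<in>UNIV. \<nu> h s b * (Q h s b - Qt h s b)) - (V h s - V\<^sub>t h s))"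
proof -
  have "KL (\<nu> h s) (\<nu>\<^sub>t h s) = \<eta> * (\<Sum>b\<in>UNIV. \<nu> h s b * ((Q h s b - Qt h s b) - (V h s - V\<^sub>t h s)))"
    unfolding nupi_def[abs_def] nut_def[abs_def] KL_exp by (simp add: Api_def At_def algebra_simps)
  then show ?thesis
    by (simp add: right_diff_distrib sum_subtractf nupi_sum[OF assms] flip: sum_distrib_right)
qed

lemma Api_minus_At:
  assumes "\<eta> \<noteq> 0" "h \<le> H"
  shows "A h s b - A\<^sub>t h s b =
    (Q h s b - Qt h s b) - (\<Sum>b'\<in>UNIV. \<nu> h s b' * (Q h s b' - Qt h s b')) + inverse \<eta> * KL (\<nu> h s) (\<nu>\<^sub>t h s)"
  using assms(1) by (simp add: KL_nupi_nut[OF assms] Api_def At_def flip: mult.assoc)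

definition bellman_residual :: "nat \<Rightarrow> 's \<Rightarrow> 'b \<Rightarrow> real" where
  "bellman_residual i s b = rpi pol r i s b + \<gamma> * (\<Sum>s'\<in>UNIV. P\<pi> i s b s' * V\<^sub>t (Suc i) s') - Qt i s b"

lemma Delta1_Suc:
  assumes "h \<le> H"
  shows "\<Delta>\<^sub>1 h s b = bellman_residual h s b
    + \<gamma> * (\<Sum>s1\<in>UNIV. \<Sum>b1\<in>UNIV. P\<pi> h s b s1 * \<nu> (Suc h) s1 b1 * \<Delta>\<^sub>1 (Suc h) s1 b1)"
proof -
  have "\<gamma> ^ (i - h) * E\<^sub>s\<^sub>b h s b i (bellman_residual i) = \<gamma> * (\<Sum>s1\<in>UNIV. \<Sum>b1\<in>UNIV.
      P\<pi> h s b s1 * \<nu> (Suc h) s1 b1 * (\<gamma> ^ (i - Suc h) * E\<^sub>s\<^sub>b (Suc h) s1 b1 i (bellman_residual i)))"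
    if "i \<in> {Suc h..H}" for i
  proof -
    from that have "h < i" "\<gamma> ^ (i - h) = \<gamma> * \<gamma> ^ (i - Suc h)"
      by (auto simp: Suc_diff_Suc simp flip: power_Suc)
    then show ?thesis
      by (simp add: Esb_Suc_first sum_distrib_left mult_ac)
  qed
  moreover have "{h..H} = insert h {Suc h..H}"
    using assms by auto
  ultimately show ?thesis
    by (simp add: Delta1_def bellman_residual_def[abs_def] Esb_self sum_distrib_left
        sum.swap[of _ "{Suc h..H}"])
qed

lemma Delta2_Suc:
  assumes "\<eta> \<noteq> 0" "h \<le> H"
  shows "\<Delta>\<^sub>2 h s = KL (\<nu> h s) (\<nu>\<^sub>t h s)
    + \<gamma> * (\<Sum>b\<in>UNIV. \<nu> h s b * (\<Sum>s1\<in>UNIV. P\<pi> h s b s1 * \<Delta>\<^sub>2 (Suc h) s1))"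
proof -
  define kl where "kl i s' (b' :: 'b) = KL (\<nu> i s') (\<nu>\<^sub>t i s')" for i s' b'
  have "\<gamma> ^ (i - h) * E\<^sub>s h s i (kl i) = \<gamma> * (\<Sum>b\<in>UNIV. \<Sum>s1\<in>UNIV.
      \<nu> h s b * (P\<pi> h s b s1 * (\<gamma> ^ (i - Suc h) * E\<^sub>s (Suc h) s1 i (kl i))))"
    if "i \<in> {Suc h..H}" for i
  proof -
    from that have "h < i" "\<gamma> ^ (i - h) = \<gamma> * \<gamma> ^ (i - Suc h)"
      by (auto simp: Suc_diff_Suc simp flip: power_Suc)
    then show ?thesis
      by (simp add: Es_Suc_first sum_distrib_left mult_ac)
  qed
  moreover have "{h..H} = insert h {Suc h..H}"
    using assms by auto
  moreover have "E\<^sub>s h s h (kl h) = KL (\<nu> h s) (\<nu>\<^sub>t h s)"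
    by (simp add: Es_def Esb_self kl_def nupi_sum[OF assms] flip: sum_distrib_right)
  ultimately show ?thesis
    by (simp add: Delta2_def kl_def[abs_def] sum_distrib_left sum.swap[of _ "{Suc h..H}"])
qed

lemma Delta1_eq_Q_gap:
  assumes "\<eta> \<noteq> 0" "h \<le> H"
  shows "\<Delta>\<^sub>1 h s b = Q h s b - Qt h s b + \<gamma> / \<eta> * (\<Sum>s1\<in>UNIV. P\<pi> h s b s1 * \<Delta>\<^sub>2 (Suc h) s1)"
  using assms(2)
proof (induction h arbitrary: s b rule: inc_induct)
  case base
  show ?case
    by (simp add: Delta1_def Delta2_def Esb_self Qpi_def Vpi_def Vt_def)
next
  case (step h)
  have avg: "(\<Sum>b1\<in>UNIV. \<nu> (Suc h) s1 b1 * \<Delta>\<^sub>1 (Suc h) s1 b1) = V (Suc h) s1 - V\<^sub>t (Suc h) s1 + \<Delta>\<^sub>2 (Suc h) s1 / \<eta>"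
    for s1
  proof -
    have "(\<Sum>b1\<in>UNIV. \<nu> (Suc h) s1 b1 * \<Delta>\<^sub>1 (Suc h) s1 b1)
        = (\<Sum>b1\<in>UNIV. \<nu> (Suc h) s1 b1 * (Q (Suc h) s1 b1 - Qt (Suc h) s1 b1))
          + \<gamma> / \<eta> * (\<Sum>b1\<in>UNIV. \<nu> (Suc h) s1 b1 * (\<Sum>s2\<in>UNIV. P\<pi> (Suc h) s1 b1 s2 * \<Delta>\<^sub>2 (Suc (Suc h)) s2))"
      by (simp add: step.IH distrib_left sum.distrib sum_distrib_left mult_ac)
    then show ?thesis
      using step.hyps assms(1) KL_nupi_nut[OF assms(1), of "Suc h" s1] Delta2_Suc[OF assms(1), of "Suc h" s1]
      by (simp add: field_simps)
  qed
  have "\<Delta>\<^sub>1 h s b = bellman_residual h s b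
      + \<gamma> * (\<Sum>s1\<in>UNIV. P\<pi> h s b s1 * (\<Sum>b1\<in>UNIV. \<nu> (Suc h) s1 b1 * \<Delta>\<^sub>1 (Suc h) s1 b1))"
    using Delta1_Suc[of h s b] step.hyps by (simp add: sum_distrib_left mult.assoc)
  also have "\<dots> = bellman_residual h s b
      + \<gamma> * (\<Sum>s1\<in>UNIV. P\<pi> h s b s1 * (V (Suc h) s1 - V\<^sub>t (Suc h) s1))
      + \<gamma> / \<eta> * (\<Sum>s1\<in>UNIV. P\<pi> h s b s1 * \<Delta>\<^sub>2 (Suc h) s1)"
    unfolding avg by (simp add: distrib_left sum.distrib sum_distrib_left mult_ac)
  also have "\<dots> = Q h s b - Qt h s b + \<gamma> / \<eta> * (\<Sum>s1\<in>UNIV. P\<pi> h s b s1 * \<Delta>\<^sub>2 (Suc h) s1)"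
    by (simp add: bellman_residual_def Qpi_def algebra_simps sum_subtractf)
  finally show ?case .
qed

lemma Esb_Suc_Delta2:
  assumes "\<eta> \<noteq> 0" "h \<le> H"
  shows "E\<^sub>s\<^sub>b h s b (Suc h) (\<lambda>s' b'. \<Delta>\<^sub>2 (Suc h) s') = (\<Sum>s1\<in>UNIV. P\<pi> h s b s1 * \<Delta>\<^sub>2 (Suc h) s1)"
proof (cases "Suc h \<le> H")
  case True
  then show ?thesis
    by (simp add: Esb_Suc_first Esb_self nupi_sum[OF assms(1) True] flip: sum_distrib_left sum_distrib_right)
next
  case False
  \<comment> \<open>\<open>h = H\<close>: here \<open>\<nu> (Suc H)\<close> is junk, not a distribution, but \<open>\<Delta>\<^sub>2 (Suc H) = 0\<close>.\<close>
  with assms(2) show ?thesis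
    by (simp add: Esb_def Delta2_def)
qed

end

theorem mainTheorem13:
  fixes P :: "nat \<Rightarrow> 's::finite \<Rightarrow> 'a::finite \<Rightarrow> 'b::finite \<Rightarrow> 's \<Rightarrow> real"
    and r :: "nat \<Rightarrow> 's \<Rightarrow> 'a \<Rightarrow> 'b \<Rightarrow> real"
    and pol :: "nat \<Rightarrow> 's \<Rightarrow> 'b \<Rightarrow> 'a \<Rightarrow> real"
    and Qt :: "nat \<Rightarrow> 's \<Rightarrow> 'b \<Rightarrow> real"
    and rt :: "nat \<Rightarrow> 's \<Rightarrow> 'a \<Rightarrow> 'b \<Rightarrow> real"
    and \<gamma> \<eta> :: real and H h :: nat and s :: 's and b :: 'b
  assumes eta: "\<eta> > 0"
    and gamma: "0 \<le> \<gamma>" "\<gamma> \<le> 1"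
    and P_nonneg: "\<And>i s a b s'. i \<in> {1..H} \<Longrightarrow> P i s a b s' \<ge> 0"
    and P_sum: "\<And>i s a b. i \<in> {1..H} \<Longrightarrow> (\<Sum>s'\<in>UNIV. P i s a b s') = 1"
    and pol_nonneg: "\<And>i s b a. i \<in> {1..H} \<Longrightarrow> pol i s b a \<ge> 0"
    and pol_sum: "\<And>i s b. i \<in> {1..H} \<Longrightarrow> (\<Sum>a\<in>UNIV. pol i s b a) = 1"
    and h: "h \<in> {1..H}"
  shows
   "Api P r pol \<gamma> \<eta> H h s b - At \<eta> H Qt h s b =
      (Esb P r pol \<gamma> \<eta> H h s b h (\<lambda>s' b'. Delta1 P r pol \<gamma> \<eta> H Qt h s' b')
         - \<gamma> / \<eta> * Esb P r pol \<gamma> \<eta> H h s b (Suc h) (\<lambda>s' b'. Delta2 P r pol \<gamma> \<eta> H Qt (Suc h) s'))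
    - (Es P r pol \<gamma> \<eta> H h s h (\<lambda>s' b'. Delta1 P r pol \<gamma> \<eta> H Qt h s' b')
         - \<gamma> / \<eta> * Es P r pol \<gamma> \<eta> H h s (Suc h) (\<lambda>s' b'. Delta2 P r pol \<gamma> \<eta> H Qt (Suc h) s'))
    + inverse \<eta> * KL (nupi P r pol \<gamma> \<eta> H h s) (nut \<eta> H Qt h s)
   \<and> KL (nupi P r pol \<gamma> \<eta> H h s) (nut \<eta> H Qt h s)
      = \<eta> * Es P r pol \<gamma> \<eta> H h s h (\<lambda>s' b'. Api P r pol \<gamma> \<eta> H h s' b' - At \<eta> H Qt h s' b')
   \<and> ((\<gamma> = 0 \<and> (\<forall>i\<in>{1..H}. \<forall>s' b'. Qt i s' b' = rpi pol rt i s' b')) \<longrightarrow>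
       Api P r pol \<gamma> \<eta> H h s b - At \<eta> H Qt h s b =
         Esb P r pol \<gamma> \<eta> H h s b h (\<lambda>s' b'. rpi pol r h s' b' - rpi pol rt h s' b')
         - Es P r pol \<gamma> \<eta> H h s h (\<lambda>s' b'. rpi pol r h s' b' - rpi pol rt h s' b')
         + inverse \<eta> * KL (nupi P r pol \<gamma> \<eta> H h s) (nut \<eta> H Qt h s))"
proof -
  have \<eta>: "\<eta> \<noteq> 0" and hH: "h \<le> H"
    using eta h by auto
  let ?\<nu> = "nupi P r pol \<gamma> \<eta> H h s"
  let ?gap = "\<lambda>b'. Qpi P r pol \<gamma> \<eta> H h s b' - Qt h s b'"
  let ?\<Delta>\<^sub>1 = "\<lambda>s' b'. Delta1 P r pol \<gamma> \<eta> H Qt h s' b'"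
  let ?\<Delta>\<^sub>2 = "\<lambda>s' b'. Delta2 P r pol \<gamma> \<eta> H Qt (Suc h) s'"
  have Q_gap: "Delta1 P r pol \<gamma> \<eta> H Qt h s b' - \<gamma> / \<eta> * Esb P r pol \<gamma> \<eta> H h s b' (Suc h) ?\<Delta>\<^sub>2 = ?gap b'"
    for b'
    by (simp add: Delta1_eq_Q_gap[OF \<eta> hH] Esb_Suc_Delta2[OF \<eta> hH])
  have averaged_gap: "Es P r pol \<gamma> \<eta> H h s h ?\<Delta>\<^sub>1 - \<gamma> / \<eta> * Es P r pol \<gamma> \<eta> H h s (Suc h) ?\<Delta>\<^sub>2
      = (\<Sum>b'\<in>UNIV. ?\<nu> b' * ?gap b')"
    by (simp add: Es_def Esb_self sum_distrib_left right_diff_distrib sum_subtractf mult_ac flip: Q_gap)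
  have decomposition: "Api P r pol \<gamma> \<eta> H h s b - At \<eta> H Qt h s b =
      (Esb P r pol \<gamma> \<eta> H h s b h ?\<Delta>\<^sub>1 - \<gamma> / \<eta> * Esb P r pol \<gamma> \<eta> H h s b (Suc h) ?\<Delta>\<^sub>2)
    - (Es P r pol \<gamma> \<eta> H h s h ?\<Delta>\<^sub>1 - \<gamma> / \<eta> * Es P r pol \<gamma> \<eta> H h s (Suc h) ?\<Delta>\<^sub>2)
    + inverse \<eta> * KL ?\<nu> (nut \<eta> H Qt h s)"
    unfolding Esb_self Q_gap averaged_gap by (rule Api_minus_At[OF \<eta> hH])
  have KL_eq: "KL ?\<nu> (nut \<eta> H Qt h s)
      = \<eta> * Es P r pol \<gamma> \<eta> H h s h (\<lambda>s' b'. Api P r pol \<gamma> \<eta> H h s' b' - At \<eta> H Qt h s' b')"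
    by (simp add: Es_def Esb_self nupi_def[abs_def] nut_def[abs_def] KL_exp)
  have myopic: "Api P r pol \<gamma> \<eta> H h s b - At \<eta> H Qt h s b =
      Esb P r pol \<gamma> \<eta> H h s b h (\<lambda>s' b'. rpi pol r h s' b' - rpi pol rt h s' b')
      - Es P r pol \<gamma> \<eta> H h s h (\<lambda>s' b'. rpi pol r h s' b' - rpi pol rt h s' b')
      + inverse \<eta> * KL ?\<nu> (nut \<eta> H Qt h s)"
    if "\<gamma> = 0" and "\<forall>i\<in>{1..H}. \<forall>s' b'. Qt i s' b' = rpi pol rt i s' b'"
    using that h by (simp add: Api_minus_At[OF \<eta> hH] Es_def Esb_self Qpi_def)
  show ?thesis
    using decomposition KL_eq myopic by blast
qed

end
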